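(* Let $\mathcal B$ be a connected building set on $[n+1]$ whose nested set complex $K_{\mathcal B}$ is a flag complex. Then for every subset $I\subseteq[n+1]$ of even cardinality, the complex $(K_{\mathcal B})_I$ is homotopy equivalent to $K^{\mathrm{odd}}_{\mathcal B|_I}$.
   Context: A building set on a finite set $S\subset\mathbb N$ is a collection $\mathcal B$ of nonempty subsets of $S$ containing every singleton, such that $I,J\in\mathcal B$, $I\cap J\neq\emptyset$ imply $I\cup J\in\mathcal B$; its connected components are its inclusion-maximal elements; it is connected if $S\in\mathcal B$; $\mathcal B|_I=\{J\in\mathcal B:J\subseteq I\}$. For a connected building set $\mathcal B$ on $[n+1]$, the nested set complex $K_{\mathcal B}$ is the simplicial complex on vertex set $\mathcal B\setminus\{[n+1]\}$ whose simplices are the subsets $N\subseteq\mathcal B\setminus\{[n+1]\}$ such that (i) any $I,J\in N$ satisfy $I\subseteq J$, $J\subseteq I$ or $I\cap J=\emptyset$, and (ii) for any $r\ge2$ pairwise disjoint $I_1,\dots,I_r\in N$, $I_1\cup\dots\cup I_r\notin\mathcal B$. A simplicial complex is flag if every set of vertices that are pairwise joined by edges forms a simplex. For $I\subseteq[n+1]$ of even cardinality, $(K_{\mathcal B})_I$ is the full subcomplex of $K_{\mathcal B}$ induced on the vertices $J$ with $|J\cap I|$ odd, and $K^{\mathrm{odd}}_{\mathcal B|_I}$ is the full subcomplex of $K_{\mathcal B}$ induced on the vertices $J\in\mathcal B$ with $J\subseteq I$ and $|J|$ odd. *)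

theory Defs
  imports "HOL-Analysis.Analysis"
begin

definition building_set :: "nat set \<Rightarrow> nat set set \<Rightarrow> bool" where
  "building_set S B \<longleftrightarrow> finite S \<and> (\<forall>J\<in>B. J \<noteq> {} \<and> J \<subseteq> S) \<and> (\<forall>i\<in>S. {i} \<in> B) \<and>
     (\<forall>I\<in>B. \<forall>J\<in>B. I \<inter> J \<noteq> {} \<longrightarrow> I \<union> J \<in> B)"

definition connected_building_set :: "nat set \<Rightarrow> nat set set \<Rightarrow> bool" where
  "connected_building_set S B \<longleftrightarrow> building_set S B \<and> S \<in> B"

definition restrict_bs :: "nat set set \<Rightarrow> nat set \<Rightarrow> nat set set" where
  "restrict_bs B I = {J \<in> B. J \<subseteq> I}"

text \<open>Simplicial complexes are represented as their set of faces (finite vertex sets),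
  including the empty face.\<close>

definition nested_set_complex :: "nat set \<Rightarrow> nat set set \<Rightarrow> nat set set set" where
  "nested_set_complex S B = {N. N \<subseteq> B - {S} \<and>
     (\<forall>I\<in>N. \<forall>J\<in>N. I \<subseteq> J \<or> J \<subseteq> I \<or> I \<inter> J = {}) \<and>
     (\<forall>M\<subseteq>N. 2 \<le> card M \<and> (\<forall>I\<in>M. \<forall>J\<in>M. I \<noteq> J \<longrightarrow> I \<inter> J = {}) \<longrightarrow> \<Union>M \<notin> B)}"

definition vertices :: "'v set set \<Rightarrow> 'v set" where
  "vertices K = {v. {v} \<in> K}"

definition flag_complex :: "'v set set \<Rightarrow> bool" where
  "flag_complex K \<longleftrightarrow> (\<forall>N. finite N \<and> N \<subseteq> vertices K \<and>
      (\<forall>u\<in>N. \<forall>v\<in>N. u \<noteq> v \<longrightarrow> {u, v} \<in> K) \<longrightarrow> N \<in> K)"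

definition full_subcomplex :: "'v set set \<Rightarrow> 'v set \<Rightarrow> 'v set set" where
  "full_subcomplex K W = {\<sigma> \<in> K. \<sigma> \<subseteq> W}"

definition K_sub :: "nat set \<Rightarrow> nat set set \<Rightarrow> nat set \<Rightarrow> nat set set set" where
  "K_sub S B I = full_subcomplex (nested_set_complex S B)
      {J \<in> vertices (nested_set_complex S B). odd (card (J \<inter> I))}"

definition K_odd :: "nat set \<Rightarrow> nat set set \<Rightarrow> nat set \<Rightarrow> nat set set set" where
  "K_odd S B I = full_subcomplex (nested_set_complex S B)
      {J \<in> vertices (nested_set_complex S B). J \<in> restrict_bs B I \<and> odd (card J)}"

text \<open>Geometric realization of a (finite) simplicial complex K: points are
  barycentric coordinate functions whose support is a nonempty face of K, with the
  subspace topology of the product topology on functions 'v \<Rightarrow> real.\<close>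
definition realization :: "'v set set \<Rightarrow> ('v \<Rightarrow> real) topology" where
  "realization K = top_of_set {f. (\<forall>v. 0 \<le> f v) \<and> finite {v. f v \<noteq> 0} \<and>
       {v. f v \<noteq> 0} \<in> K \<and> sum f {v. f v \<noteq> 0} = 1}"

end

theory Submission
  imports Defs
begin

text \<open>Delete the vertices J of (K_B)_I that are not vertices of K^odd one at a time,
  always one of smallest cardinality. Such a J is not contained in I and |J \<inter> I| is odd;
  the connected components of B restricted to J \<inter> I partition J \<inter> I, so one of them, C,
  has odd cardinality, and C is a vertex of K^odd. Every remaining vertex compatible with J
  is compatible with C (a vertex properly inside J has already been removed unless it lies
  in I), so by flagness J is dominated by C. Deleting a dominated vertex does not change
  the homotopy type: pushing the barycentric weight of J onto C is a deformation retraction.\<close>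

definition realization_points :: "'v set set \<Rightarrow> ('v \<Rightarrow> real) set" where
  "realization_points K = {f. (\<forall>v. 0 \<le> f v) \<and> finite {v. f v \<noteq> 0} \<and> {v. f v \<noteq> 0} \<in> K \<and>
     sum f {v. f v \<noteq> 0} = 1}"

lemma realization_eq_top_of_set: "realization K = top_of_set (realization_points K)"
  by (simp add: realization_def realization_points_def)

lemma realization_points_full_subcomplex_iff:
  "f \<in> realization_points (full_subcomplex K W) \<longleftrightarrow>
     f \<in> realization_points K \<and> {v. f v \<noteq> 0} \<subseteq> W"
  by (auto simp: realization_points_def full_subcomplex_def)

definition move_weight :: "'v \<Rightarrow> 'v \<Rightarrow> real \<Rightarrow> ('v \<Rightarrow> real) \<Rightarrow> 'v \<Rightarrow> real" where
  "move_weight v w t f = (\<lambda>u. f u + (if u = w then t * f v else 0) - (if u = v then t * f v else 0))"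

lemma move_weight_support: "{u. move_weight v w t f u \<noteq> 0} \<subseteq> insert w {u. f u \<noteq> 0}"
  by (auto simp: move_weight_def split: if_splits)

lemma move_weight_eq_self: "f v = 0 \<Longrightarrow> move_weight v w t f = f"
  by (auto simp: move_weight_def fun_eq_iff)

lemma move_weight_0: "move_weight v w 0 f = f"
  by (simp add: move_weight_def fun_eq_iff)

lemma sum_move_weight:
  assumes "finite T" "v \<in> T" "w \<in> T"
  shows "sum (move_weight v w t f) T = sum f T"
  using assms by (simp add: move_weight_def sum.distrib sum_subtractf)

lemma continuous_on_move_weight [continuous_intros]:
  fixes f :: "'a::topological_space \<Rightarrow> 'v \<Rightarrow> real"
  assumes "continuous_on S t" "continuous_on S f"
  shows "continuous_on S (\<lambda>z. move_weight v w (t z) (f z))"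
proof (rule continuous_on_coordinatewise_then_product)
  have f: "continuous_on S (\<lambda>z. f z u)" for u
    by (rule continuous_on_product_then_coordinatewise[OF assms(2)])
  show "continuous_on S (\<lambda>z. move_weight v w (t z) (f z) u)" for u
    unfolding move_weight_def using assms(1) f
    by (cases "u = w"; cases "u = v"; simp; intro continuous_intros assms(1) f)
qed

definition downward_closed :: "'v set set \<Rightarrow> bool" where
  "downward_closed K \<longleftrightarrow> (\<forall>\<sigma>\<in>K. \<forall>\<tau>. \<tau> \<subseteq> \<sigma> \<longrightarrow> \<tau> \<in> K)"

text \<open>The link of v in the full subcomplex on W is a cone with apex w.\<close>
definition dominated_in :: "'v set set \<Rightarrow> 'v set \<Rightarrow> 'v \<Rightarrow> 'v \<Rightarrow> bool" where
  "dominated_in K W v w \<longleftrightarrow> v \<in> W \<and> w \<in> W \<and> v \<noteq> w \<and>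
     (\<forall>\<sigma>\<in>K. \<sigma> \<subseteq> W \<and> v \<in> \<sigma> \<longrightarrow> insert w \<sigma> \<in> K)"

lemma sum_over_support:
  assumes "finite T" "{v. g v \<noteq> 0} \<subseteq> T"
  shows "sum g {v. g v \<noteq> 0} = sum g T"
  using assms by (intro sum.mono_neutral_left) auto

lemma move_weight_in_realization_points:
  assumes down: "downward_closed K"
    and dom: "dominated_in K W v w"
    and f: "f \<in> realization_points (full_subcomplex K W)" and t: "0 \<le> t" "t \<le> 1"
  shows "move_weight v w t f \<in> realization_points (full_subcomplex K W)"
proof (cases "f v = 0")
  case True
  then show ?thesis using f by (simp add: move_weight_eq_self)
next
  case False
  let ?g = "move_weight v w t f" and ?s = "{u. f u \<noteq> 0}"
  have f_nonneg: "\<And>u. 0 \<le> f u" and s_fin: "finite ?s" and "?s \<in> K" and "?s \<subseteq> W"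
    and s_sum: "sum f ?s = 1"
    using f by (auto simp: realization_points_def full_subcomplex_def)
  then have face: "insert w ?s \<in> K" "insert w ?s \<subseteq> W"
    using dom False by (auto simp: dominated_in_def)
  have "0 \<le> ?g u" for u
    using f_nonneg[of u] f_nonneg[of v] t dom mult_left_le_one_le[of "f v" t]
    by (auto simp: move_weight_def dominated_in_def algebra_simps)
  moreover have "finite {u. ?g u \<noteq> 0}"
    by (rule finite_subset[OF move_weight_support]) (simp add: s_fin)
  moreover have "{u. ?g u \<noteq> 0} \<in> K"
    using down face(1) move_weight_support[of v w t f] unfolding downward_closed_def by blast
  moreover have "{u. ?g u \<noteq> 0} \<subseteq> W"
    using move_weight_support face(2) by (rule order_trans)
  moreover have "sum ?g {u. ?g u \<noteq> 0} = 1"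
  proof -
    have "sum ?g {u. ?g u \<noteq> 0} = sum ?g (insert w ?s)"
      using s_fin move_weight_support[of v w t f] by (intro sum_over_support) auto
    also have "\<dots> = sum f (insert w ?s)"
      using s_fin False by (intro sum_move_weight) auto
    also have "\<dots> = sum f ?s"
      using s_fin by (intro sum_over_support[symmetric]) auto
    finally show ?thesis using s_sum by simp
  qed
  ultimately show ?thesis by (auto simp: realization_points_def full_subcomplex_def)
qed

lemma realization_delete_dominated_vertex:
  assumes down: "downward_closed K"
    and dom: "dominated_in K W v w"
  shows "realization (full_subcomplex K W) homotopy_equivalent_space
         realization (full_subcomplex K (W - {v}))"
proof -
  let ?A = "realization_points (full_subcomplex K W)"
    and ?A' = "realization_points (full_subcomplex K (W - {v}))"
  have in_A: "move_weight v w t f \<in> ?A" if "f \<in> ?A" "t \<in> {0..1}" for f t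
    using move_weight_in_realization_points[OF down dom] that by simp
  have "v \<noteq> w" using dom by (simp add: dominated_in_def)
  have "move_weight v w 1 f \<in> ?A'" if "f \<in> ?A" for f
  proof -
    have "move_weight v w 1 f \<in> ?A" using in_A that by simp
    moreover have "move_weight v w 1 f v = 0" using \<open>v \<noteq> w\<close> by (simp add: move_weight_def)
    ultimately show ?thesis unfolding realization_points_full_subcomplex_iff by blast
  qed
  moreover have "move_weight v w 1 f = f" if "f \<in> ?A'" for f
  proof -
    have "f v = 0" using that unfolding realization_points_full_subcomplex_iff by blast
    then show ?thesis by (rule move_weight_eq_self)
  qed
  moreover have "?A' \<subseteq> ?A"
    by (auto simp: realization_points_full_subcomplex_iff)
  moreover have "continuous_on ?A (move_weight v w 1)"
    using continuous_on_move_weight[OF continuous_on_const continuous_on_id] by simp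
  ultimately have retract: "retraction_maps (top_of_set ?A) (top_of_set ?A') (move_weight v w 1) id"
    by (auto simp: retraction_maps_def)
  have deform: "homotopic_with (\<lambda>x. True) (top_of_set ?A) (top_of_set ?A) (id \<circ> move_weight v w 1) id"
  proof -
    let ?h = "\<lambda>z. move_weight v w (1 - fst z) (snd z)"
    have "continuous_on ({0..1} \<times> ?A) ?h"
      by (intro continuous_intros)
    moreover have "?h ` ({0..1} \<times> ?A) \<subseteq> ?A"
      using in_A by auto
    ultimately show ?thesis
      unfolding homotopic_with_def
      by (intro exI[of _ ?h]) (auto simp: move_weight_0)
  qed
  show ?thesis
    unfolding realization_eq_top_of_set
    by (rule deformation_retraction_imp_homotopy_equivalent_space[OF deform retract])
qed

lemma realization_delete_dominated_vertices:
  assumes down: "downward_closed K"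
    and "finite X" "V \<inter> X = {}"
    and dom: "\<And>Y. Y \<subseteq> X \<Longrightarrow> Y \<noteq> {} \<Longrightarrow> \<exists>v\<in>Y. \<exists>w. dominated_in K (V \<union> Y) v w"
  shows "realization (full_subcomplex K (V \<union> X)) homotopy_equivalent_space
         realization (full_subcomplex K V)"
  using assms(2-4)
proof (induction X rule: finite_psubset_induct)
  case (psubset X)
  show ?case
  proof (cases "X = {}")
    case True
    then show ?thesis by (simp add: homotopy_equivalent_space_refl)
  next
    case False
    then obtain v w where v: "v \<in> X" and "dominated_in K (V \<union> X) v w"
      using psubset.prems(2) by blast
    moreover have "V \<union> X - {v} = V \<union> (X - {v})"
      using v psubset.prems(1) by blast
    ultimately have "realization (full_subcomplex K (V \<union> X)) homotopy_equivalent_space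
               realization (full_subcomplex K (V \<union> (X - {v})))"
      using realization_delete_dominated_vertex[OF down] by metis
    also have "\<dots> homotopy_equivalent_space realization (full_subcomplex K V)"
      using v psubset by (intro psubset.IH) auto
    finally show ?thesis .
  qed
qed

lemma flag_complex_dominated_in:
  assumes flag: "flag_complex K" and down: "downward_closed K" and "finite W"
    and vw: "v \<in> W" "w \<in> W" "v \<noteq> w" "{v, w} \<in> K"
    and nbr: "\<And>u. u \<in> W \<Longrightarrow> u \<noteq> v \<Longrightarrow> u \<noteq> w \<Longrightarrow> {u, v} \<in> K \<Longrightarrow> {u, w} \<in> K"
  shows "dominated_in K W v w"
  unfolding dominated_in_def
proof (intro conjI ballI impI)
  fix \<sigma> assume "\<sigma> \<in> K" and \<sigma>: "\<sigma> \<subseteq> W \<and> v \<in> \<sigma>"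
  then have face: "\<tau> \<in> K" if "\<tau> \<subseteq> \<sigma>" for \<tau>
    using down that by (auto simp: downward_closed_def)
  have "{w} \<in> K" using down vw(4) by (auto simp: downward_closed_def)
  then have "insert w \<sigma> \<subseteq> vertices K"
    using face by (auto simp: vertices_def)
  moreover have "finite (insert w \<sigma>)"
    using \<sigma> \<open>finite W\<close> finite_subset by auto
  moreover have "{x, y} \<in> K" if "x \<in> insert w \<sigma>" "y \<in> insert w \<sigma>" "x \<noteq> y" for x y
  proof -
    have to_w: "{x, w} \<in> K" if "x \<in> \<sigma>" "x \<noteq> w" for x
      using that \<sigma> vw(4) nbr[of x] face[of "{x, v}"] by (cases "x = v") (auto simp: insert_commute)
    show ?thesis
      using that to_w[of x] to_w[of y] face[of "{x, y}"] by (auto simp: insert_commute)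
  qed
  ultimately show "insert w \<sigma> \<in> K"
    using flag unfolding flag_complex_def by blast
qed (use vw in auto)

lemma downward_closed_nested_set_complex: "downward_closed (nested_set_complex S B)"
  unfolding downward_closed_def
proof (intro ballI allI impI)
  fix N N' assume "N \<in> nested_set_complex S B" "N' \<subseteq> N"
  then show "N' \<in> nested_set_complex S B"
    unfolding nested_set_complex_def by (simp add: subset_iff)
qed

lemma vertices_nested_set_complex: "vertices (nested_set_complex S B) = B - {S}"
proof -
  have "{J} \<in> nested_set_complex S B \<longleftrightarrow> J \<in> B - {S}" for J
    by (auto simp: nested_set_complex_def dest!: subset_singletonD)
  then show ?thesis by (auto simp: vertices_def)
qed

definition compatible :: "'a set set \<Rightarrow> 'a set \<Rightarrow> 'a set \<Rightarrow> bool" where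
  "compatible B I J \<longleftrightarrow> (I \<subseteq> J \<or> J \<subseteq> I \<or> I \<inter> J = {}) \<and> (I \<inter> J = {} \<longrightarrow> I \<union> J \<notin> B)"

lemma subset_doubleton_card_ge_2:
  assumes "M \<subseteq> {a, b}" "2 \<le> card M"
  shows "M = {a, b}"
proof -
  have "card {a, b} \<le> 2" by (cases "a = b") simp_all
  then show ?thesis using card_seteq[OF _ assms(1)] assms(2) by simp
qed

lemma edge_in_nested_set_complex_iff:
  assumes "I \<noteq> J"
  shows "{I, J} \<in> nested_set_complex S B \<longleftrightarrow> I \<in> B - {S} \<and> J \<in> B - {S} \<and> compatible B I J"
proof -
  have union: "(\<forall>M\<subseteq>{I, J}. 2 \<le> card M \<and> (\<forall>X\<in>M. \<forall>Y\<in>M. X \<noteq> Y \<longrightarrow> X \<inter> Y = {}) \<longrightarrow> \<Union>M \<notin> B)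
        \<longleftrightarrow> (I \<inter> J = {} \<longrightarrow> I \<union> J \<notin> B)" (is "?all \<longleftrightarrow> _")
  proof
    assume ?all
    show "I \<inter> J = {} \<longrightarrow> I \<union> J \<notin> B"
    proof
      assume "I \<inter> J = {}"
      moreover have "card {I, J} = 2" using assms by simp
      ultimately show "I \<union> J \<notin> B"
        using \<open>?all\<close>[rule_format, of "{I, J}"] by (simp add: Int_commute)
    qed
  next
    assume disjoint_union: "I \<inter> J = {} \<longrightarrow> I \<union> J \<notin> B"
    show ?all
    proof (intro allI impI)
      fix M assume "M \<subseteq> {I, J}" and M: "2 \<le> card M \<and> (\<forall>X\<in>M. \<forall>Y\<in>M. X \<noteq> Y \<longrightarrow> X \<inter> Y = {})"
      then have "M = {I, J}" by (intro subset_doubleton_card_ge_2) auto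
      moreover from this have "I \<inter> J = {}" using M assms by simp
      ultimately show "\<Union>M \<notin> B" using disjoint_union by simp
    qed
  qed
  have nested: "(\<forall>X\<in>{I, J}. \<forall>Y\<in>{I, J}. X \<subseteq> Y \<or> Y \<subseteq> X \<or> X \<inter> Y = {}) \<longleftrightarrow>
      (I \<subseteq> J \<or> J \<subseteq> I \<or> I \<inter> J = {})"
    by (auto simp: Int_commute)
  show ?thesis
    unfolding nested_set_complex_def compatible_def mem_Collect_eq union nested by blast
qed

lemma building_set_finite: "building_set S B \<Longrightarrow> finite B"
  unfolding building_set_def by (meson PowI finite_Pow_iff finite_subset subsetI)

definition component_of_restrict :: "nat set set \<Rightarrow> nat set \<Rightarrow> nat set \<Rightarrow> bool" where
  "component_of_restrict B I C \<longleftrightarrow> C \<in> restrict_bs B I \<and> (\<forall>D\<in>restrict_bs B I. C \<subseteq> D \<longrightarrow> D = C)"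

lemma component_of_restrict_exists:
  assumes bs: "building_set S B" and "I \<subseteq> S" "i \<in> I"
  shows "\<exists>C. component_of_restrict B I C \<and> i \<in> C"
proof -
  let ?A = "{D \<in> restrict_bs B I. i \<in> D}"
  have "finite ?A" using building_set_finite[OF bs] by (simp add: restrict_bs_def)
  moreover have "{i} \<in> ?A" using bs assms(2,3) by (auto simp: building_set_def restrict_bs_def)
  ultimately obtain C where "C \<in> ?A" and "\<forall>D\<in>?A. C \<subseteq> D \<longrightarrow> C = D"
    using finite_has_maximal2 by blast
  then show ?thesis by (auto simp: component_of_restrict_def)
qed

lemma component_of_restrict_disjoint:
  assumes "building_set S B" "component_of_restrict B I C" "component_of_restrict B I D"
    and "C \<inter> D \<noteq> {}"
  shows "C = D"
proof -
  have "C \<union> D \<in> restrict_bs B I"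
    using assms by (auto simp: building_set_def component_of_restrict_def restrict_bs_def)
  then show ?thesis
    using assms(2,3) unfolding component_of_restrict_def by (metis Un_upper1 Un_upper2)
qed

lemma component_of_restrict_odd:
  assumes bs: "building_set S B" and "I \<subseteq> S" and odd: "odd (card I)"
  shows "\<exists>C. component_of_restrict B I C \<and> odd (card C)"
proof (rule ccontr)
  assume "\<nexists>C. component_of_restrict B I C \<and> odd (card C)"
  let ?P = "Collect (component_of_restrict B I)"
  have even: "even (card C)" if "C \<in> ?P" for C
    using that \<open>\<nexists>C. _\<close> by blast
  have "\<Union>?P = I"
    using component_of_restrict_exists[OF bs \<open>I \<subseteq> S\<close>]
    by (auto simp: component_of_restrict_def restrict_bs_def)
  moreover have "card (\<Union>?P) = sum card ?P"
  proof (rule card_Union_disjoint)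
    show "pairwise disjnt ?P"
      using component_of_restrict_disjoint[OF bs] by (auto simp: pairwise_def disjnt_def)
    show "finite C" if "C \<in> ?P" for C
    proof -
      have "C \<subseteq> S" using that \<open>I \<subseteq> S\<close> by (auto simp: component_of_restrict_def restrict_bs_def)
      then show ?thesis using bs finite_subset by (auto simp: building_set_def)
    qed
  qed
  moreover have "even (sum card ?P)"
    using even by (intro dvd_sum) auto
  ultimately show False using odd by simp
qed

lemma compatible_component_of_restrict:
  assumes bs: "building_set S B" and u: "u \<in> B" and J: "J \<in> B"
    and C: "component_of_restrict B (J \<inter> I) C" and uJ: "compatible B u J"
    and below: "u \<subset> J \<Longrightarrow> u \<subseteq> I"
  shows "compatible B u C"
proof -
  have union: "X \<union> Y \<in> B" if "X \<in> B" "Y \<in> B" "X \<inter> Y \<noteq> {}" for X Y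
    using bs that by (auto simp: building_set_def)
  have nonempty: "X \<noteq> {}" if "X \<in> B" for X
    using bs that by (auto simp: building_set_def)
  have CB: "C \<in> B" "C \<subseteq> J" "C \<subseteq> I"
    and Cmax: "\<And>D. D \<in> B \<Longrightarrow> C \<subseteq> D \<Longrightarrow> D \<subseteq> J \<inter> I \<Longrightarrow> D = C"
    using C by (auto simp: component_of_restrict_def restrict_bs_def)
  consider "J \<subseteq> u" | "u \<inter> J = {}" | "u \<subset> J"
    using uJ by (auto simp: compatible_def)
  then show ?thesis
  proof cases
    case 1
    then show ?thesis using CB nonempty[OF CB(1)] by (auto simp: compatible_def)
  next
    case 2
    have "u \<union> C \<notin> B"
    proof
      assume "u \<union> C \<in> B"
      moreover have "(u \<union> C) \<inter> J \<noteq> {}" using CB nonempty by blast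
      ultimately have "u \<union> C \<union> J \<in> B" using union J by blast
      moreover have "u \<union> C \<union> J = u \<union> J" using CB by blast
      ultimately show False using uJ 2 by (simp add: compatible_def)
    qed
    then show ?thesis using 2 CB by (auto simp: compatible_def)
  next
    case 3
    then have "u \<union> C \<subseteq> J \<inter> I" using below CB by blast
    then have "u \<subseteq> C" if "u \<union> C \<in> B" using Cmax[OF that] by blast
    then show ?thesis using union[OF u CB(1)] nonempty[OF u] by (auto simp: compatible_def)
  qed
qed

lemma nested_set_complex_dominated_vertex:
  assumes bs: "building_set S B" and flag: "flag_complex (nested_set_complex S B)"
    and "Y \<noteq> {}" and Y: "\<And>J. J \<in> Y \<Longrightarrow> J \<in> B - {S} \<and> odd (card (J \<inter> I)) \<and> \<not> J \<subseteq> I"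
  defines "V \<equiv> {C \<in> B - {S}. C \<subseteq> I \<and> odd (card C)}"
  shows "\<exists>J\<in>Y. \<exists>C. dominated_in (nested_set_complex S B) (V \<union> Y) J C"
proof -
  let ?K = "nested_set_complex S B"
  obtain J where "J \<in> Y" and J_min: "\<And>u. u \<in> Y \<Longrightarrow> card J \<le> card u"
    using ex_has_least_nat[of "\<lambda>J. J \<in> Y" _ card] \<open>Y \<noteq> {}\<close> by blast
  then have J: "J \<in> B" "J \<noteq> S" "odd (card (J \<inter> I))" "\<not> J \<subseteq> I" using Y by auto
  have "J \<subseteq> S" "finite S" using bs J(1) by (auto simp: building_set_def)
  then obtain C where C: "component_of_restrict B (J \<inter> I) C" "odd (card C)"
    using component_of_restrict_odd[OF bs _ J(3)] by blast
  then have CB: "C \<in> B" "C \<subseteq> J" "C \<subseteq> I" by (auto simp: component_of_restrict_def restrict_bs_def)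
  then have "C \<noteq> J" "C \<noteq> S" using J \<open>J \<subseteq> S\<close> by auto
  then have "C \<in> V" using CB C(2) by (simp add: V_def)
  have "C \<noteq> {}" using bs CB(1) by (auto simp: building_set_def)
  then have "compatible B J C" using CB(2) by (auto simp: compatible_def)
  then have "{J, C} \<in> ?K"
    using J CB \<open>C \<noteq> J\<close> \<open>C \<noteq> S\<close> by (simp add: edge_in_nested_set_complex_iff)
  moreover have "{u, C} \<in> ?K"
    if u: "u \<in> V \<union> Y" "u \<noteq> J" "u \<noteq> C" and "{u, J} \<in> ?K" for u
  proof -
    have "u \<in> B - {S}" "compatible B u J"
      using \<open>{u, J} \<in> ?K\<close> u(2) by (auto simp: edge_in_nested_set_complex_iff)
    moreover have "u \<subseteq> I" if "u \<subset> J"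
      using psubset_card_mono[OF finite_subset[OF \<open>J \<subseteq> S\<close> \<open>finite S\<close>] that] u(1) J_min
      by (force simp: V_def)
    ultimately have "compatible B u C"
      using compatible_component_of_restrict[OF bs _ J(1) C(1)] by blast
    then show ?thesis using \<open>u \<in> B - {S}\<close> CB(1) \<open>C \<noteq> S\<close> u(3)
      by (simp add: edge_in_nested_set_complex_iff)
  qed
  moreover have "finite (V \<union> Y)"
    using building_set_finite[OF bs] Y by (auto simp: V_def intro: finite_subset)
  ultimately have "dominated_in ?K (V \<union> Y) J C"
    using \<open>J \<in> Y\<close> \<open>C \<in> V\<close> \<open>C \<noteq> J\<close>
    by (intro flag_complex_dominated_in[OF flag downward_closed_nested_set_complex]) auto
  then show ?thesis using \<open>J \<in> Y\<close> by blast
qed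

theorem lemma5p2:
  fixes n :: nat and B :: "nat set set" and I :: "nat set"
  assumes "connected_building_set {1..n+1} B"
      and "flag_complex (nested_set_complex {1..n+1} B)"
      and "I \<subseteq> {1..n+1}" and "even (card I)"
  shows "realization (K_sub {1..n+1} B I)
           homotopy_equivalent_space realization (K_odd {1..n+1} B I)"
proof -
  define S where "S = {1..n+1}"
  define V where "V = {C \<in> B - {S}. C \<subseteq> I \<and> odd (card C)}"
  define X where "X = {J \<in> B - {S}. odd (card (J \<inter> I)) \<and> \<not> J \<subseteq> I}"
  have bs: "building_set S B"
    using assms(1) by (simp add: connected_building_set_def S_def)
  have "K_sub S B I = full_subcomplex (nested_set_complex S B) (V \<union> X)"
    unfolding K_sub_def vertices_nested_set_complex V_def X_def
    by (rule arg_cong[where f = "full_subcomplex _"]) (auto simp: Int_absorb2)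
  moreover have "K_odd S B I = full_subcomplex (nested_set_complex S B) V"
    unfolding K_odd_def vertices_nested_set_complex V_def restrict_bs_def
    by (rule arg_cong[where f = "full_subcomplex _"]) auto
  moreover have "realization (full_subcomplex (nested_set_complex S B) (V \<union> X))
      homotopy_equivalent_space realization (full_subcomplex (nested_set_complex S B) V)"
  proof (rule realization_delete_dominated_vertices[OF downward_closed_nested_set_complex])
    show "finite X" using building_set_finite[OF bs] by (simp add: X_def)
    show "V \<inter> X = {}" by (auto simp: V_def X_def)
    show "\<exists>J\<in>Y. \<exists>C. dominated_in (nested_set_complex S B) (V \<union> Y) J C"
      if "Y \<subseteq> X" "Y \<noteq> {}" for Y
      unfolding V_def using assms(2) that
      by (intro nested_set_complex_dominated_vertex[OF bs]) (auto simp: S_def X_def)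
  qed
  ultimately show ?thesis by (simp add: S_def)
qed

end
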